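(* Let $\mathcal{A}$ be a bounded PTA, $s$ a symbolic state of $\mathcal{A}$, $x$ a clock, and $M(x)\in\mathbb{N}$ with $M(x)\ge \mathrm{maxC}^x(\mathcal{A})$. Let $\nu$ be a parameter valuation within the parameter domain, and let $(l,v)\in \nu(\mathrm{Ext}^x_{M(x)}(s))$ be a concrete state of $\nu(\mathcal{A})$. Then there exists a state $(l,v')\in\nu(s)$ such that $(l,v)$ and $(l,v')$ are bisimilar in $\nu(\mathcal{A})$.
   Context: A PTA is $\mathcal{A}=(\Sigma,L,l_0,L_F,X,P,\mathbb{D},I,E)$: finite actions $\Sigma$, finite locations $L$, initial $l_0$, accepting $L_F$, clocks $X$ (real-valued, $\ge0$), parameters $P$, parameter domain $\mathbb{D}(p)=(\mathbb{D}^-(p),\mathbb{D}^+(p))$ with admissible values $[\mathbb{D}^-(p),\mathbb{D}^+(p)]$, invariants $I(l)$ (clock guards), and edges $(l,g,a,R,l')$ with guard $g$ and reset set $R\subseteq X$. A simple clock guard is $x\bowtie\sum_i\alpha_ip_i+z$ with $\alpha_i,z\in\mathbb{Z}$, ${\bowtie}\in\{<,\le,=,\ge,>\}$; a clock guard is a conjunction of them. $\mathcal{A}$ is bounded if all $\mathbb{D}^\pm(p)$ are finite. $G^x(\mathcal{A})$ is the set of simple clock guards in which $x$ appears among the conjuncts of guards and invariants. For $g: x\bowtie\sum_i\alpha_ip_i+z$, $\mathrm{maxC}(g)=\sum_i\alpha_i\gamma_i+z$ with $\gamma_i=\mathbb{D}^-(p_i)$ if $\alpha_i<0$, $\mathbb{D}^+(p_i)$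 if $\alpha_i>0$, $0$ otherwise; $\mathrm{maxC}^x(\mathcal{A})=\max_{g\in G^x(\mathcal{A})}\mathrm{maxC}(g)$. For a parameter valuation $\nu$, $\nu(\mathcal{A})$ is the timed automaton obtained by substituting $\nu(p)$ for each $p$; its semantics is the transition system with states $(l,v)$ ($v$ a clock valuation satisfying $\nu(I(l))$), delay transitions $(l,v)\to(l,v+d)$ if all intermediate $(l,v+d')$, $d'\in[0,d]$, are states, and discrete transitions along edges $(l,g,a,R,l')$ from $(l,v)$ to $(l',v[R:=0])$ if $v$ satisfies $\nu(g)$ and both are states. Two states are bisimilar if they are related by a bisimulation of this labelled transition system (labels: delays $d$ and edges $e$). A symbolic state is a pair $(l,C)$ with $C$ a set of valuations of $X\cup P$; $\nu(s)=\{(l,v)\mid (v,\nu)\in C\}$. Cylindrification: $\mathrm{Cyl}_x(C)=\{w\mid\exists w'\in C,\ w'(y)=w(y)\ \forall y\ne x,\ w(x)\ge0\}$. $\mathrm{Ext}^x_M(C)=(C\cap(x\le M))\cup(\mathrm{Cyl}_x(C\cap(x>M))\cap(x>M))$, applied to a symbolic state via its constraint. *)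

theory Defs
  imports Complex_Main "HOL-Library.Extended_Real"
begin

text \<open>Parametric timed automata. Actions, locations, clocks and parameters are
  finite types ('s, 'l, 'c, 'p); the sets Sigma, L, X, P are the respective UNIVs.\<close>

datatype cmp = CLt | CLe | CEq | CGe | CGt

text \<open>simple clock guard  x cmp  sum_i alpha_i p_i + z : (x, cmp, alpha, z)\<close>
type_synonym ('c,'p) sguard = "'c \<times> cmp \<times> ('p \<Rightarrow> int) \<times> int"
type_synonym ('c,'p) guard = "('c,'p) sguard list"
type_synonym ('l,'s,'c,'p) edge = "'l \<times> ('c,'p) guard \<times> 's \<times> 'c set \<times> 'l"

record ('s,'l,'c,'p) pta =
  init :: 'l
  accepting :: "'l set"
  dom :: "'p \<Rightarrow> ereal \<times> ereal"
  inv :: "'l \<Rightarrow> ('c,'p) guard"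
  edges :: "('l,'s,'c,'p) edge set"

definition pta_wf :: "('s::finite,'l::finite,'c::finite,'p::finite) pta \<Rightarrow> bool" where
  "pta_wf A \<longleftrightarrow> finite (edges A)"

definition bounded_pta :: "('s,'l,'c,'p) pta \<Rightarrow> bool" where
  "bounded_pta A \<longleftrightarrow> (\<forall>p. \<bar>fst (dom A p)\<bar> \<noteq> \<infinity> \<and> \<bar>snd (dom A p)\<bar> \<noteq> \<infinity>)"

definition in_domain :: "('s,'l,'c,'p) pta \<Rightarrow> ('p \<Rightarrow> real) \<Rightarrow> bool" where
  "in_domain A \<nu> \<longleftrightarrow> (\<forall>p. fst (dom A p) \<le> ereal (\<nu> p) \<and> ereal (\<nu> p) \<le> snd (dom A p))"

fun cmp_holds :: "cmp \<Rightarrow> real \<Rightarrow> real \<Rightarrow> bool" where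
  "cmp_holds CLt a b = (a < b)"
| "cmp_holds CLe a b = (a \<le> b)"
| "cmp_holds CEq a b = (a = b)"
| "cmp_holds CGe a b = (a \<ge> b)"
| "cmp_holds CGt a b = (a > b)"

definition sat_sguard :: "('c \<Rightarrow> real) \<Rightarrow> ('p::finite \<Rightarrow> real) \<Rightarrow> ('c,'p) sguard \<Rightarrow> bool" where
  "sat_sguard v \<nu> g = (case g of (x, r, \<alpha>, z) \<Rightarrow>
      cmp_holds r (v x) ((\<Sum>p\<in>UNIV. real_of_int (\<alpha> p) * \<nu> p) + real_of_int z))"

definition sat_guard :: "('c \<Rightarrow> real) \<Rightarrow> ('p::finite \<Rightarrow> real) \<Rightarrow> ('c,'p) guard \<Rightarrow> bool" where
  "sat_guard v \<nu> g \<longleftrightarrow> (\<forall>h\<in>set g. sat_sguard v \<nu> h)"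

definition Gx :: "('s,'l,'c,'p) pta \<Rightarrow> 'c \<Rightarrow> ('c,'p) sguard set" where
  "Gx A x = {h. fst h = x \<and> ((\<exists>l. h \<in> set (inv A l)) \<or>
                   (\<exists>l g a R l'. (l,g,a,R,l') \<in> edges A \<and> h \<in> set g))}"

definition maxC :: "('s,'l,'c,'p::finite) pta \<Rightarrow> ('c,'p) sguard \<Rightarrow> real" where
  "maxC A g = (case g of (x, r, \<alpha>, z) \<Rightarrow>
      (\<Sum>p\<in>UNIV. real_of_int (\<alpha> p) *
          (if \<alpha> p < 0 then real_of_ereal (fst (dom A p))
           else if \<alpha> p > 0 then real_of_ereal (snd (dom A p)) else 0)) + real_of_int z)"

text \<open>maxC^x(A) as the maximum over G^x(A) (taken in ereal; -infinity if G^x(A) is empty)\<close>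
definition maxCx :: "('s,'l,'c,'p::finite) pta \<Rightarrow> 'c \<Rightarrow> ereal" where
  "maxCx A x = (SUP g\<in>Gx A x. ereal (maxC A g))"

definition is_state :: "('p::finite \<Rightarrow> real) \<Rightarrow> ('s,'l,'c,'p) pta \<Rightarrow> 'l \<times> ('c \<Rightarrow> real) \<Rightarrow> bool" where
  "is_state \<nu> A st \<longleftrightarrow> (case st of (l, v) \<Rightarrow> (\<forall>c. v c \<ge> 0) \<and> sat_guard v \<nu> (inv A l))"

datatype ('l,'s,'c,'p) label = Delay real | EdgeL "('l,'s,'c,'p) edge"

definition reset :: "('c \<Rightarrow> real) \<Rightarrow> 'c set \<Rightarrow> ('c \<Rightarrow> real)" where
  "reset v R = (\<lambda>c. if c \<in> R then 0 else v c)"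

definition trans :: "('p::finite \<Rightarrow> real) \<Rightarrow> ('s,'l,'c,'p) pta \<Rightarrow> 'l \<times> ('c \<Rightarrow> real)
     \<Rightarrow> ('l,'s,'c,'p) label \<Rightarrow> 'l \<times> ('c \<Rightarrow> real) \<Rightarrow> bool" where
  "trans \<nu> A st lab st' \<longleftrightarrow> (case st of (l, v) \<Rightarrow> case st' of (l', v') \<Rightarrow>
     (case lab of
        Delay d \<Rightarrow> d \<ge> 0 \<and> l' = l \<and> v' = (\<lambda>c. v c + d) \<and>
                   (\<forall>d'\<in>{0..d}. is_state \<nu> A (l, \<lambda>c. v c + d'))
      | EdgeL e \<Rightarrow> (\<exists>g a R. e = (l, g, a, R, l') \<and> e \<in> edges A \<and> sat_guard v \<nu> g \<and>
                   v' = reset v R \<and> is_state \<nu> A (l, v) \<and> is_state \<nu> A (l', v'))))"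

definition bisimulation :: "('p::finite \<Rightarrow> real) \<Rightarrow> ('s,'l,'c,'p) pta \<Rightarrow>
    (('l \<times> ('c \<Rightarrow> real)) \<times> ('l \<times> ('c \<Rightarrow> real))) set \<Rightarrow> bool" where
  "bisimulation \<nu> A B \<longleftrightarrow>
     (\<forall>(s1, s2)\<in>B. is_state \<nu> A s1 \<and> is_state \<nu> A s2 \<and>
        (\<forall>lab s1'. trans \<nu> A s1 lab s1' \<longrightarrow> (\<exists>s2'. trans \<nu> A s2 lab s2' \<and> (s1', s2') \<in> B)) \<and>
        (\<forall>lab s2'. trans \<nu> A s2 lab s2' \<longrightarrow> (\<exists>s1'. trans \<nu> A s1 lab s1' \<and> (s1', s2') \<in> B)))"

definition bisimilar :: "('p::finite \<Rightarrow> real) \<Rightarrow> ('s,'l,'c,'p) pta \<Rightarrow>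
    'l \<times> ('c \<Rightarrow> real) \<Rightarrow> 'l \<times> ('c \<Rightarrow> real) \<Rightarrow> bool" where
  "bisimilar \<nu> A s1 s2 \<longleftrightarrow> (\<exists>B. bisimulation \<nu> A B \<and> (s1, s2) \<in> B)"

text \<open>Symbolic states: valuations of X \<union> P are pairs (clock valuation, parameter valuation).\<close>
type_synonym ('c,'p) val = "('c \<Rightarrow> real) \<times> ('p \<Rightarrow> real)"
type_synonym ('l,'c,'p) symstate = "'l \<times> ('c,'p) val set"

definition inst :: "('p \<Rightarrow> real) \<Rightarrow> ('l,'c,'p) symstate \<Rightarrow> ('l \<times> ('c \<Rightarrow> real)) set" where
  "inst \<nu> s = {(fst s, v) | v. (v, \<nu>) \<in> snd s}"

definition Cyl :: "'c \<Rightarrow> ('c,'p) val set \<Rightarrow> ('c,'p) val set" where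
  "Cyl x C = {w. \<exists>w'\<in>C. (\<forall>y. y \<noteq> x \<longrightarrow> fst w' y = fst w y) \<and> snd w' = snd w \<and> fst w x \<ge> 0}"

definition Ext :: "'c \<Rightarrow> real \<Rightarrow> ('c,'p) val set \<Rightarrow> ('c,'p) val set" where
  "Ext x M C = (C \<inter> {w. fst w x \<le> M}) \<union> (Cyl x (C \<inter> {w. fst w x > M}) \<inter> {w. fst w x > M})"

definition Ext_sym :: "'c \<Rightarrow> real \<Rightarrow> ('l,'c,'p) symstate \<Rightarrow> ('l,'c,'p) symstate" where
  "Ext_sym x M s = (fst s, Ext x M (snd s))"

end

theory Submission
  imports Defs
begin

text \<open>Two valuations that agree on every clock except x, and on x either agree or both exceed
  M = M(x), are bisimilar: since M bounds every constant x is ever compared with in a domain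
  valuation, such valuations satisfy the same guards and invariants, and the relation is
  preserved by delays and resets. A point of Ext^x_M(s) outside s arises from a point of s by
  changing x above M, so it is related to a point of s in this way.\<close>

lemma guard_const_le_maxC:
  fixes A :: "('s,'l,'c,'p::finite) pta"
  assumes "bounded_pta A" "in_domain A \<nu>"
  shows "(\<Sum>p\<in>UNIV. real_of_int (\<alpha> p) * \<nu> p) + real_of_int z \<le> maxC A (y, r, \<alpha>, z)"
proof -
  have "real_of_int (\<alpha> p) * \<nu> p \<le> real_of_int (\<alpha> p) *
          (if \<alpha> p < 0 then real_of_ereal (fst (dom A p))
           else if \<alpha> p > 0 then real_of_ereal (snd (dom A p)) else 0)" for p
  proof -
    obtain a b where ab: "dom A p = (a, b)" by (cases "dom A p")
    have "\<bar>a\<bar> \<noteq> \<infinity>" "\<bar>b\<bar> \<noteq> \<infinity>"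
      using assms(1) ab unfolding bounded_pta_def by (metis fst_conv snd_conv)+
    moreover have "a \<le> ereal (\<nu> p)" "ereal (\<nu> p) \<le> b"
      using assms(2) ab unfolding in_domain_def by (metis fst_conv snd_conv)+
    ultimately have "real_of_ereal a \<le> \<nu> p" "\<nu> p \<le> real_of_ereal b"
      by (cases a; cases b; auto)+
    then show ?thesis using ab by (auto intro: mult_left_mono mult_left_mono_neg)
  qed
  then show ?thesis unfolding maxC_def by (simp add: sum_mono)
qed

definition equiv_above :: "'c \<Rightarrow> real \<Rightarrow> ('c \<Rightarrow> real) \<Rightarrow> ('c \<Rightarrow> real) \<Rightarrow> bool" where
  "equiv_above x M u u' \<longleftrightarrow>
     (\<forall>y. y \<noteq> x \<longrightarrow> u y = u' y) \<and> (u x = u' x \<or> (u x > M \<and> u' x > M))"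

lemma equiv_above_refl: "equiv_above x M u u"
  unfolding equiv_above_def by simp

lemma equiv_above_sym: "equiv_above x M u u' \<Longrightarrow> equiv_above x M u' u"
  unfolding equiv_above_def by auto

lemma equiv_above_delay:
  "equiv_above x M u u' \<Longrightarrow> d \<ge> 0 \<Longrightarrow> equiv_above x M (\<lambda>c. u c + d) (\<lambda>c. u' c + d)"
  unfolding equiv_above_def by auto

lemma equiv_above_reset: "equiv_above x M u u' \<Longrightarrow> equiv_above x M (reset u S) (reset u' S)"
  unfolding equiv_above_def reset_def by auto

lemma Ext_equiv_above:
  assumes "(v, \<nu>) \<in> Ext x M C"
  obtains v' where "(v', \<nu>) \<in> C" "equiv_above x M v v'"
proof -
  from assms consider "(v, \<nu>) \<in> C"
    | w where "w \<in> C" "fst w x > M" "\<forall>y. y \<noteq> x \<longrightarrow> fst w y = v y" "snd w = \<nu>" "v x > M"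
    unfolding Ext_def Cyl_def by auto
  then show thesis
  proof cases
    case 1
    then show thesis by (rule that[OF _ equiv_above_refl])
  next
    case 2
    then have "(fst w, \<nu>) \<in> C" "equiv_above x M v (fst w)"
      unfolding equiv_above_def by (cases w; auto)+
    then show thesis using that by blast
  qed
qed

definition equiv_above_rel :: "('p::finite \<Rightarrow> real) \<Rightarrow> ('s,'l,'c,'p) pta \<Rightarrow> 'c \<Rightarrow> real \<Rightarrow>
    (('l \<times> ('c \<Rightarrow> real)) \<times> ('l \<times> ('c \<Rightarrow> real))) set" where
  "equiv_above_rel \<nu> A x M =
     {((l, u), (l', u')). l = l' \<and> is_state \<nu> A (l, u) \<and> equiv_above x M u u'}"

context
  fixes A :: "('s,'l,'c,'p::finite) pta" and x :: 'c and M :: real and \<nu> :: "'p \<Rightarrow> real"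
  assumes bounded: "bounded_pta A" and domain: "in_domain A \<nu>"
    and maxCx_le: "maxCx A x \<le> ereal M" and M_nonneg: "M \<ge> 0"
begin

lemma sat_sguard_equiv_above:
  assumes "equiv_above x M u u'" "h \<in> Gx A x \<or> fst h \<noteq> x"
  shows "sat_sguard u \<nu> h = sat_sguard u' \<nu> h"
proof -
  obtain y r \<alpha> z where h: "h = (y, r, \<alpha>, z)" by (cases h) auto
  let ?c = "(\<Sum>p\<in>UNIV. real_of_int (\<alpha> p) * \<nu> p) + real_of_int z"
  show ?thesis
  proof (cases "y = x \<and> u x \<noteq> u' x")
    case True
    then have g: "h \<in> Gx A x" and gt: "u x > M" "u' x > M"
      using assms h unfolding equiv_above_def by auto
    have "ereal (maxC A h) \<le> maxCx A x" unfolding maxCx_def using g by (rule SUP_upper)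
    with maxCx_le have "maxC A h \<le> M" by (meson ereal_less_eq(3) order_trans)
    moreover have "?c \<le> maxC A h" using guard_const_le_maxC[OF bounded domain] h by simp
    ultimately have "?c < u x" "?c < u' x" using gt by auto
    then show ?thesis using True h unfolding sat_sguard_def by (cases r) auto
  next
    case False
    then have "u y = u' y" using assms(1) h unfolding equiv_above_def by auto
    then show ?thesis using h unfolding sat_sguard_def by simp
  qed
qed

lemma sat_guard_equiv_above:
  assumes "equiv_above x M u u'" "(\<exists>l. g = inv A l) \<or> (\<exists>l a S l'. (l, g, a, S, l') \<in> edges A)"
  shows "sat_guard u \<nu> g = sat_guard u' \<nu> g"
  unfolding sat_guard_def
proof (intro ball_cong refl)
  fix h assume "h \<in> set g"
  with assms(2) have "h \<in> Gx A x \<or> fst h \<noteq> x" unfolding Gx_def by blast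
  with assms(1) show "sat_sguard u \<nu> h = sat_sguard u' \<nu> h" by (rule sat_sguard_equiv_above)
qed

lemma is_state_equiv_above:
  assumes "equiv_above x M u u'"
  shows "is_state \<nu> A (l, u) = is_state \<nu> A (l, u')"
proof -
  have "(\<forall>c. u c \<ge> 0) = (\<forall>c. u' c \<ge> 0)"
    using assms M_nonneg unfolding equiv_above_def by (metis less_eq_real_def order_trans)
  moreover have "sat_guard u \<nu> (inv A l) = sat_guard u' \<nu> (inv A l)"
    using sat_guard_equiv_above assms by blast
  ultimately show ?thesis unfolding is_state_def by simp
qed

lemma equiv_above_rel_sym: "(s1, s2) \<in> equiv_above_rel \<nu> A x M \<Longrightarrow> (s2, s1) \<in> equiv_above_rel \<nu> A x M"
  unfolding equiv_above_rel_def using equiv_above_sym is_state_equiv_above by auto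

lemma equiv_above_rel_simulation:
  assumes "(s1, s2) \<in> equiv_above_rel \<nu> A x M" "trans \<nu> A s1 lab s1'"
  shows "\<exists>s2'. trans \<nu> A s2 lab s2' \<and> (s1', s2') \<in> equiv_above_rel \<nu> A x M"
proof -
  obtain l u u' where s: "s1 = (l, u)" "s2 = (l, u')" and st: "is_state \<nu> A (l, u)"
    and r: "equiv_above x M u u'"
    using assms(1) unfolding equiv_above_rel_def by auto
  obtain l1 u1 where s1': "s1' = (l1, u1)" by (cases s1')
  show ?thesis
  proof (cases lab)
    case (Delay d)
    then have d: "d \<ge> 0" "l1 = l" "u1 = (\<lambda>c. u c + d)"
      and path: "\<forall>d'\<in>{0..d}. is_state \<nu> A (l, \<lambda>c. u c + d')"
      using assms(2) s s1' unfolding trans_def by auto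
    have "\<forall>d'\<in>{0..d}. is_state \<nu> A (l, \<lambda>c. u' c + d')"
      using path is_state_equiv_above[OF equiv_above_delay[OF r]] by auto
    then have "trans \<nu> A s2 lab (l, \<lambda>c. u' c + d)" using Delay d s unfolding trans_def by auto
    moreover have "(s1', (l, \<lambda>c. u' c + d)) \<in> equiv_above_rel \<nu> A x M"
      unfolding equiv_above_rel_def using s1' d path equiv_above_delay[OF r d(1)] by auto
    ultimately show ?thesis by blast
  next
    case (EdgeL e)
    then obtain g a S where e: "e = (l, g, a, S, l1)" "e \<in> edges A" "sat_guard u \<nu> g"
      "u1 = reset u S" "is_state \<nu> A (l1, u1)"
      using assms(2) s s1' unfolding trans_def by auto
    have r1: "equiv_above x M u1 (reset u' S)" using equiv_above_reset[OF r] e by simp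
    have "sat_guard u' \<nu> g" using sat_guard_equiv_above[OF r] e by blast
    moreover have "is_state \<nu> A (l, u')" using st is_state_equiv_above[OF r] by blast
    moreover have "is_state \<nu> A (l1, reset u' S)" using e(5) is_state_equiv_above[OF r1] by blast
    ultimately have "trans \<nu> A s2 lab (l1, reset u' S)" using EdgeL e s unfolding trans_def by auto
    moreover have "(s1', (l1, reset u' S)) \<in> equiv_above_rel \<nu> A x M"
      unfolding equiv_above_rel_def using s1' e r1 by auto
    ultimately show ?thesis by blast
  qed
qed

lemma bisimulation_equiv_above_rel: "bisimulation \<nu> A (equiv_above_rel \<nu> A x M)"
  unfolding bisimulation_def
proof (intro ballI, clarify, intro conjI allI impI)
  fix s1 s2 assume rel: "(s1, s2) \<in> equiv_above_rel \<nu> A x M"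
  show "is_state \<nu> A s1" "is_state \<nu> A s2"
    using rel equiv_above_rel_sym[OF rel] unfolding equiv_above_rel_def by auto
  show "\<exists>s2'. trans \<nu> A s2 lab s2' \<and> (s1', s2') \<in> equiv_above_rel \<nu> A x M"
    if "trans \<nu> A s1 lab s1'" for lab s1'
    using equiv_above_rel_simulation[OF rel that] .
  show "\<exists>s1'. trans \<nu> A s1 lab s1' \<and> (s1', s2') \<in> equiv_above_rel \<nu> A x M"
    if "trans \<nu> A s2 lab s2'" for lab s2'
    using equiv_above_rel_simulation[OF equiv_above_rel_sym[OF rel] that] equiv_above_rel_sym
    by blast
qed

lemma bisimilar_equiv_above:
  assumes "is_state \<nu> A (l, u)" "equiv_above x M u u'"
  shows "bisimilar \<nu> A (l, u) (l, u')"
  using assms bisimulation_equiv_above_rel unfolding bisimilar_def equiv_above_rel_def by blast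

end

theorem mainTheorem3:
  fixes A :: "('s::finite,'l::finite,'c::finite,'p::finite) pta"
    and s :: "('l,'c,'p) symstate" and x :: 'c and M :: "'c \<Rightarrow> nat"
    and \<nu> :: "'p \<Rightarrow> real" and l :: 'l and v :: "'c \<Rightarrow> real"
  assumes "pta_wf A" and "bounded_pta A"
    and "maxCx A x \<le> ereal (real (M x))"
    and "in_domain A \<nu>"
    and "(l, v) \<in> inst \<nu> (Ext_sym x (real (M x)) s)"
    and "is_state \<nu> A (l, v)"
  shows "\<exists>v'. (l, v') \<in> inst \<nu> s \<and> is_state \<nu> A (l, v') \<and> bisimilar \<nu> A (l, v) (l, v')"
proof -
  have l: "l = fst s" and ext: "(v, \<nu>) \<in> Ext x (real (M x)) (snd s)"
    using assms(5) unfolding inst_def Ext_sym_def by auto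
  obtain v' where "(v', \<nu>) \<in> snd s" and equiv: "equiv_above x (real (M x)) v v'"
    using ext by (rule Ext_equiv_above)
  moreover have "is_state \<nu> A (l, v')"
    using is_state_equiv_above[OF assms(2,4,3) of_nat_0_le_iff equiv] assms(6) by blast
  moreover have "bisimilar \<nu> A (l, v) (l, v')"
    using bisimilar_equiv_above[OF assms(2,4,3) of_nat_0_le_iff assms(6) equiv] .
  ultimately show ?thesis using l unfolding inst_def by auto
qed

end
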